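(* Let $n$ be an even positive integer and let $\mathbb{F}$ be a field with $\operatorname{char}(\mathbb{F})\neq 2$ and $|\mathbb{F}|\geq n^2+1$. Let $Q_n$ denote the set of all $n\times n$ skew-symmetric matrices over $\mathbb{F}$. Let $\psi:Q_n\to Q_n$ be a map, and let $\chi$ be a map from the set of all invertible matrices in $Q_n$ into $Q_n$. If $\operatorname{tr}(xy)=\operatorname{tr}(\chi(x)\psi(y))$ for every invertible $x\in Q_n$ and every $y\in Q_n$, then $\psi$ is linear.
   Context: A matrix $x$ is skew-symmetric if $x^t=-x$. *)

theory Defs
  imports "Jordan_Normal_Form.Matrix"
begin

definition skew_mats :: "nat \<Rightarrow> 'a::field mat set" where
  "skew_mats n = {x \<in> carrier_mat n n. transpose_mat x = - x}"

definition mat_trace :: "'a::comm_ring_1 mat \<Rightarrow> 'a" where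
  "mat_trace A = (\<Sum>i<dim_row A. A $$ (i, i))"

definition linear_on_skew :: "nat \<Rightarrow> ('a::field mat \<Rightarrow> 'a mat) \<Rightarrow> bool" where
  "linear_on_skew n f \<longleftrightarrow>
     (\<forall>x\<in>skew_mats n. \<forall>y\<in>skew_mats n. \<forall>a b.
        f (a \<cdot>\<^sub>m x + b \<cdot>\<^sub>m y) = a \<cdot>\<^sub>m f x + b \<cdot>\<^sub>m f y)"

end

theory Submission
  imports Defs "Jordan_Normal_Form.Determinant"
begin

(* For skew-symmetric x and y, tr (x y) = -2 \<Sum>_{a<b} x_ab y_ab, so the hypothesis says that pairing
   the upper coordinates of x with those of y gives the same as pairing \<chi> x with \<psi> y.
   For each position a < b there are two invertible skew-symmetric signed permutation matrices
   that differ only at (a,b) and (b,a); they come from a fixed-point-free involution of {0..<n}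
   pairing a with b, which is where n even is needed. Pairing \<chi> of their difference with \<psi> y
   recovers y_ab, so a fixed square matrix W maps the upper coordinates of \<psi> y to those of y.
   On the skew units this exhibits a right inverse of W, so W is invertible and \<psi> is linear.
   Using signed permutation matrices makes the lower bound on the size of the field unnecessary. *)

lemma kernel_trivial_if_right_inverse:
  fixes W B :: "'b \<Rightarrow> 'b \<Rightarrow> 'a::field" and c :: "'b \<Rightarrow> 'a"
  assumes "finite P"
    and right_inverse: "\<And>p p'. p \<in> P \<Longrightarrow> p' \<in> P \<Longrightarrow>
          (\<Sum>q\<in>P. W p q * B q p') = (if p = p' then 1 else 0)"
    and kernel: "\<And>p. p \<in> P \<Longrightarrow> (\<Sum>q\<in>P. W p q * c q) = 0"
    and "q \<in> P"
  shows "c q = 0"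
proof -
  define m where "m = card P"
  obtain h where h: "bij_betw h {..<m} P"
    using ex_bij_betw_nat_finite[OF \<open>finite P\<close>] by (auto simp: m_def atLeast0LessThan)
  have h_in: "h k \<in> P" if "k < m" for k
    using h that by (auto simp: bij_betw_def)
  have reindex: "(\<Sum>l<m. g (h l)) = (\<Sum>q\<in>P. g q)" for g :: "'b \<Rightarrow> 'a"
    using sum.reindex_bij_betw[OF h] .
  define A where "A = mat m m (\<lambda>(k, l). W (h k) (h l))"
  define A' where "A' = mat m m (\<lambda>(l, k). B (h l) (h k))"
  define v where "v = vec m (\<lambda>l. c (h l))"
  have A: "A \<in> carrier_mat m m" and A': "A' \<in> carrier_mat m m" and v: "v \<in> carrier_vec m"
    by (auto simp: A_def A'_def v_def)
  have "A * A' = 1\<^sub>m m"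
  proof (rule eq_matI)
    fix k l assume kl: "k < dim_row (1\<^sub>m m)" "l < dim_col (1\<^sub>m m)"
    then have "(A * A') $$ (k, l) = (\<Sum>q\<in>P. W (h k) q * B q (h l))"
      using reindex[of "\<lambda>q. W (h k) q * B q (h l)"]
      by (simp add: A_def A'_def scalar_prod_def atLeast0LessThan)
    also have "\<dots> = 1\<^sub>m m $$ (k, l)"
      using right_inverse h_in kl h by (auto simp: bij_betw_def inj_on_def)
    finally show "(A * A') $$ (k, l) = 1\<^sub>m m $$ (k, l)" .
  qed (auto simp: A_def A'_def)
  then have left_inverse: "A' * A = 1\<^sub>m m"
    using mat_mult_left_right_inverse[OF A A'] by blast
  have Av: "A *\<^sub>v v = 0\<^sub>v m"
    using kernel h_in
    by (intro eq_vecI)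
      (auto simp: A_def v_def scalar_prod_def atLeast0LessThan reindex[of "\<lambda>q. W _ q * c q"])
  have "v = (A' * A) *\<^sub>v v"
    using left_inverse v by simp
  also have "\<dots> = 0\<^sub>v m"
    using A A' v by (auto simp: Av)
  finally have "v = 0\<^sub>v m" .
  moreover obtain l where "l < m" "q = h l"
    using h \<open>q \<in> P\<close> by (auto simp: bij_betw_def)
  ultimately show ?thesis
    by (metis index_vec index_zero_vec(1) v_def)
qed

definition upper_pairs :: "nat \<Rightarrow> (nat \<times> nat) set" where
  "upper_pairs n = {(a, b). a < b \<and> b < n}"

definition upper_pairing :: "nat \<Rightarrow> 'a::comm_ring_1 mat \<Rightarrow> 'a mat \<Rightarrow> 'a" where
  "upper_pairing n w v = (\<Sum>p\<in>upper_pairs n. w $$ p * v $$ p)"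

lemma finite_upper_pairs [simp]: "finite (upper_pairs n)"
  by (rule finite_subset[of _ "{..<n} \<times> {..<n}"]) (auto simp: upper_pairs_def)

lemma upper_pairs_Suc: "upper_pairs (Suc n) = upper_pairs n \<union> (\<lambda>a. (a, n)) ` {..<n}"
  by (auto simp: upper_pairs_def less_Suc_eq)

lemma sum_square_symmetric:
  fixes f :: "nat \<times> nat \<Rightarrow> 'a::comm_ring_1"
  assumes "\<And>a b. a < n \<Longrightarrow> b < n \<Longrightarrow> f (a, b) = f (b, a)"
    and "\<And>a. a < n \<Longrightarrow> f (a, a) = 0"
  shows "(\<Sum>a<n. \<Sum>b<n. f (a, b)) = 2 * (\<Sum>p\<in>upper_pairs n. f p)"
  using assms
proof (induction n)
  case 0
  then show ?case by (simp add: upper_pairs_def)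
next
  case (Suc n)
  have "upper_pairs n \<inter> (\<lambda>a. (a, n)) ` {..<n} = {}"
    by (auto simp: upper_pairs_def)
  then have upper_sum: "(\<Sum>p\<in>upper_pairs (Suc n). f p) = (\<Sum>p\<in>upper_pairs n. f p) + (\<Sum>a<n. f (a, n))"
    unfolding upper_pairs_Suc by (subst sum.union_disjoint) (auto simp: sum.reindex inj_on_def)
  have "(\<Sum>b<n. f (n, b)) = (\<Sum>a<n. f (a, n))"
    using Suc.prems(1) by (intro sum.cong) auto
  then have "(\<Sum>a<Suc n. \<Sum>b<Suc n. f (a, b))
      = (\<Sum>a<n. \<Sum>b<n. f (a, b)) + 2 * (\<Sum>a<n. f (a, n)) + f (n, n)"
    by (simp add: sum.distrib)
  then show ?case
    using Suc upper_sum by (simp add: algebra_simps)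
qed

lemma skew_mats_carrier: "x \<in> skew_mats n \<Longrightarrow> x \<in> carrier_mat n n"
  by (simp add: skew_mats_def)

lemma skew_mats_entry_swap:
  assumes "x \<in> skew_mats n" "a < n" "b < n"
  shows "x $$ (b, a) = - x $$ (a, b)"
proof -
  have "transpose_mat x $$ (a, b) = (- x) $$ (a, b)"
    using assms(1) by (simp add: skew_mats_def)
  then show ?thesis
    using assms skew_mats_carrier by fastforce
qed

lemma skew_mats_diag:
  assumes "x \<in> skew_mats n" "a < n" "(2::'a::field) \<noteq> 0"
  shows "x $$ (a, a) = (0::'a)"
proof -
  have "2 * x $$ (a, a) = 0"
    using skew_mats_entry_swap[OF assms(1,2,2)] by (simp add: algebra_simps)
  then show ?thesis
    using assms(3) by simp
qed

lemma skew_mats_lincomb: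
  assumes x: "x \<in> skew_mats n" and y: "y \<in> skew_mats n"
  shows "a \<cdot>\<^sub>m x + b \<cdot>\<^sub>m y \<in> skew_mats n"
proof -
  have carrier: "x \<in> carrier_mat n n" "y \<in> carrier_mat n n"
    using x y skew_mats_carrier by auto
  have "transpose_mat (a \<cdot>\<^sub>m x + b \<cdot>\<^sub>m y) $$ (i, j) = - (a \<cdot>\<^sub>m x + b \<cdot>\<^sub>m y) $$ (i, j)"
    if "i < n" "j < n" for i j
    using that carrier skew_mats_entry_swap[OF x that] skew_mats_entry_swap[OF y that]
    by (simp add: algebra_simps)
  then show ?thesis
    using carrier unfolding skew_mats_def by (intro CollectI conjI eq_matI) (auto simp: add.commute)
qed

lemma skew_mats_eqI_upper:
  assumes x: "x \<in> skew_mats n" and y: "y \<in> skew_mats n" and "(2::'a::field) \<noteq> 0"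
    and upper: "\<And>p. p \<in> upper_pairs n \<Longrightarrow> x $$ p = (y $$ p :: 'a)"
  shows "x = y"
proof (rule eq_matI)
  fix i j assume "i < dim_row y" "j < dim_col y"
  then have ij: "i < n" "j < n"
    using y skew_mats_carrier by auto
  consider "i < j" | "j < i" | "i = j" by linarith
  then show "x $$ (i, j) = y $$ (i, j)"
  proof cases
    case 1
    then show ?thesis using upper ij by (simp add: upper_pairs_def)
  next
    case 2
    then show ?thesis
      using upper[of "(j, i)"] ij skew_mats_entry_swap[OF x ij] skew_mats_entry_swap[OF y ij]
      by (simp add: upper_pairs_def)
  next
    case 3
    then show ?thesis using ij skew_mats_diag x y \<open>2 \<noteq> 0\<close> by metis
  qed
qed (use skew_mats_carrier[OF x] skew_mats_carrier[OF y] in auto)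

lemma trace_mult_skew:
  assumes w: "w \<in> skew_mats n" and v: "v \<in> skew_mats n" and "(2::'a::field) \<noteq> 0"
  shows "mat_trace (w * v) = - 2 * upper_pairing n w (v :: 'a mat)"
proof -
  let ?f = "\<lambda>(a, b). w $$ (a, b) * v $$ (a, b)"
  have "w \<in> carrier_mat n n" "v \<in> carrier_mat n n"
    using w v skew_mats_carrier by auto
  then have "mat_trace (w * v) = (\<Sum>a<n. \<Sum>b<n. w $$ (a, b) * v $$ (b, a))"
    by (simp add: mat_trace_def scalar_prod_def atLeast0LessThan)
  also have "\<dots> = - (\<Sum>a<n. \<Sum>b<n. ?f (a, b))"
    unfolding sum_negf[symmetric]
  proof (intro sum.cong refl)
    show "w $$ (a, b) * v $$ (b, a) = - ?f (a, b)" if "a \<in> {..<n}" "b \<in> {..<n}" for a b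
      using skew_mats_entry_swap[OF v, of a b] that by simp
  qed
  also have "\<dots> = - (2 * (\<Sum>p\<in>upper_pairs n. ?f p))"
  proof (subst sum_square_symmetric)
    show "?f (a, b) = ?f (b, a)" if "a < n" "b < n" for a b
      using skew_mats_entry_swap[OF w that] skew_mats_entry_swap[OF v that] by simp
    show "?f (a, a) = 0" if "a < n" for a
      using skew_mats_diag[OF w that \<open>2 \<noteq> 0\<close>] by simp
  qed simp
  also have "\<dots> = - 2 * upper_pairing n w v"
    by (simp add: upper_pairing_def case_prod_beta')
  finally show ?thesis .
qed

lemma upper_pairing_eq_if_trace_eq:
  assumes "w \<in> skew_mats n" "v \<in> skew_mats n" "w' \<in> skew_mats n" "v' \<in> skew_mats n"
    and "(2::'a::field) \<noteq> 0"
    and "mat_trace (w * v) = mat_trace (w' * (v' :: 'a mat))"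
  shows "upper_pairing n w v = upper_pairing n w' v'"
  using assms trace_mult_skew[OF assms(1,2,5)] trace_mult_skew[OF assms(3,4,5)] by simp

definition skew_unit :: "nat \<Rightarrow> nat \<times> nat \<Rightarrow> 'a::field mat" where
  "skew_unit n p = mat n n (\<lambda>q. if q = p then 1 else if prod.swap q = p then -1 else 0)"

lemma skew_unit_skew:
  assumes "p \<in> upper_pairs n"
  shows "skew_unit n p \<in> skew_mats n"
  using assms unfolding skew_mats_def skew_unit_def
  by (intro CollectI conjI eq_matI) (auto simp: upper_pairs_def)

lemma skew_unit_upper_entry:
  assumes "p \<in> upper_pairs n" "q \<in> upper_pairs n"
  shows "skew_unit n p $$ q = (if q = p then 1 else 0)"
  using assms by (auto simp: skew_unit_def upper_pairs_def split: if_splits)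

definition signed_perm_mat :: "nat \<Rightarrow> (nat \<Rightarrow> nat) \<Rightarrow> (nat \<Rightarrow> 'a::field) \<Rightarrow> 'a mat" where
  "signed_perm_mat n \<sigma> s = mat n n (\<lambda>(a, b). if b = \<sigma> a then s a else 0)"

definition signed_involution :: "nat \<Rightarrow> (nat \<Rightarrow> nat) \<Rightarrow> (nat \<Rightarrow> 'a::ring_1) \<Rightarrow> bool" where
  "signed_involution n \<sigma> s \<longleftrightarrow>
     (\<forall>a<n. \<sigma> a < n \<and> \<sigma> (\<sigma> a) = a \<and> s (\<sigma> a) = - s a \<and> s a * s a = 1)"

lemma signed_perm_mat_mult:
  assumes "\<And>a. a < n \<Longrightarrow> \<sigma> a < n \<and> \<sigma> (\<sigma> a) = a"
  shows "signed_perm_mat n \<sigma> s * signed_perm_mat n \<sigma> t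
    = mat n n (\<lambda>(a, b). if b = a then s a * t (\<sigma> a) else 0)"
proof (rule eq_matI)
  fix i k assume "i < dim_row (mat n n (\<lambda>(a, b). if b = a then s a * t (\<sigma> a) else 0))"
    and "k < dim_col (mat n n (\<lambda>(a, b). if b = a then s a * t (\<sigma> a) else 0))"
  then have i: "i < n" and k: "k < n" by auto
  have "(signed_perm_mat n \<sigma> s * signed_perm_mat n \<sigma> t) $$ (i, k)
      = (\<Sum>b<n. (if b = \<sigma> i then s i else 0) * (if k = \<sigma> b then t b else 0))"
    using i k by (simp add: signed_perm_mat_def scalar_prod_def atLeast0LessThan)
  also have "\<dots> = (\<Sum>b<n. if b = \<sigma> i then s i * (if k = \<sigma> (\<sigma> i) then t (\<sigma> i) else 0) else 0)"
    by (intro sum.cong refl) auto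
  also have "\<dots> = (if k = i then s i * t (\<sigma> i) else 0)"
    using assms i by auto
  finally show "(signed_perm_mat n \<sigma> s * signed_perm_mat n \<sigma> t) $$ (i, k)
      = mat n n (\<lambda>(a, b). if b = a then s a * t (\<sigma> a) else 0) $$ (i, k)"
    using i k by simp
qed (auto simp: signed_perm_mat_def)

lemma signed_involution_mat_skew:
  assumes "signed_involution n \<sigma> s"
  shows "signed_perm_mat n \<sigma> s \<in> skew_mats n"
proof -
  have "(i = \<sigma> j) = (j = \<sigma> i)" "i = \<sigma> j \<Longrightarrow> s j = - s i" if "i < n" "j < n" for i j
    using assms that unfolding signed_involution_def by (metis, metis minus_minus)
  then show ?thesis
    unfolding skew_mats_def by (intro CollectI conjI eq_matI) (auto simp: signed_perm_mat_def)
qed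

lemma signed_involution_mat_invertible:
  assumes "signed_involution n \<sigma> s"
  shows "invertible_mat (signed_perm_mat n \<sigma> s)"
proof -
  have involution: "\<And>a. a < n \<Longrightarrow> \<sigma> a < n \<and> \<sigma> (\<sigma> a) = a"
    using assms by (simp add: signed_involution_def)
  have "signed_perm_mat n \<sigma> s * signed_perm_mat n \<sigma> (\<lambda>a. - s a) = 1\<^sub>m n"
    "signed_perm_mat n \<sigma> (\<lambda>a. - s a) * signed_perm_mat n \<sigma> s = 1\<^sub>m n"
    using assms by (simp_all add: signed_perm_mat_mult[OF involution])
      (auto intro!: eq_matI simp: signed_involution_def)
  then show ?thesis
    unfolding invertible_mat_def inverts_mat_def
    by (auto simp: signed_perm_mat_def square_mat.simps)
qed

lemma signed_involution_conjugate:
  assumes "signed_involution n \<sigma> s"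
    and "\<And>a. a < n \<Longrightarrow> \<pi> a < n \<and> \<pi>' a < n \<and> \<pi> (\<pi>' a) = a \<and> \<pi>' (\<pi> a) = a"
  shows "signed_involution n (\<pi> \<circ> \<sigma> \<circ> \<pi>') (s \<circ> \<pi>')"
  using assms unfolding signed_involution_def by auto

lemma signed_involution_adjacent:
  assumes "even n"
  shows "signed_involution n (\<lambda>a. if even a then a + 1 else a - 1)
    (\<lambda>a. if even a then 1 else - 1 :: 'a::ring_1)"
  using assms unfolding signed_involution_def by auto presburger

lemma signed_involution_exists:
  assumes "even n" "i < j" "j < n"
  obtains \<sigma> and s :: "nat \<Rightarrow> 'a::ring_1" where "signed_involution n \<sigma> s" "\<sigma> i = j" "s i = 1"
proof -
  \<comment> \<open>\<open>\<pi>\<close> sends 0 and 1 to i and j, and \<open>\<pi>'\<close> is its inverse\<close>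
  define \<pi> where "\<pi> = Transposition.transpose 0 i \<circ> Transposition.transpose 1 j"
  define \<pi>' where "\<pi>' = Transposition.transpose 1 j \<circ> Transposition.transpose 0 i"
  define \<sigma>\<^sub>0 :: "nat \<Rightarrow> nat" where "\<sigma>\<^sub>0 = (\<lambda>a. if even a then a + 1 else a - 1)"
  define s\<^sub>0 :: "nat \<Rightarrow> 'a" where "s\<^sub>0 = (\<lambda>a. if even a then 1 else - 1)"
  have "signed_involution n \<sigma>\<^sub>0 s\<^sub>0"
    unfolding \<sigma>\<^sub>0_def s\<^sub>0_def by (rule signed_involution_adjacent[OF \<open>even n\<close>])
  moreover have "\<pi> a < n \<and> \<pi>' a < n \<and> \<pi> (\<pi>' a) = a \<and> \<pi>' (\<pi> a) = a" if "a < n" for a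
  proof -
    have "Transposition.transpose x y b < n" if "x < n" "y < n" "b < n" for x y b
      using that by (simp add: transpose_def)
    moreover have "0 < n" "1 < n"
      using assms by auto
    ultimately show ?thesis
      using assms \<open>a < n\<close> by (simp add: \<pi>_def \<pi>'_def)
  qed
  ultimately have "signed_involution n (\<pi> \<circ> \<sigma>\<^sub>0 \<circ> \<pi>') (s\<^sub>0 \<circ> \<pi>')"
    by (rule signed_involution_conjugate)
  moreover have "\<pi>' i = 0" "\<pi> 1 = j"
    using assms by (auto simp: \<pi>_def \<pi>'_def transpose_def)
  ultimately show thesis
    by (intro that[of "\<pi> \<circ> \<sigma>\<^sub>0 \<circ> \<pi>'" "s\<^sub>0 \<circ> \<pi>'"]) (simp_all add: \<sigma>\<^sub>0_def s\<^sub>0_def)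
qed

lemma signed_involution_flip:
  assumes \<sigma>: "signed_involution n \<sigma> s" and "i < n" "\<sigma> i = j"
  shows "signed_involution n \<sigma> (\<lambda>a. if a = i \<or> a = j then - s a else s a)"
proof -
  have "\<sigma> j = i"
    using \<sigma> assms(2,3) by (auto simp: signed_involution_def)
  have "\<sigma> a = i \<or> \<sigma> a = j \<longleftrightarrow> a = i \<or> a = j" if "a < n" for a
    using \<sigma> that \<open>\<sigma> i = j\<close> \<open>\<sigma> j = i\<close> unfolding signed_involution_def by metis
  then show ?thesis
    using \<sigma> unfolding signed_involution_def by simp
qed

lemma invertible_skew_pair_exists:
  assumes "even n" "p \<in> upper_pairs n"
  obtains x\<^sub>1 x\<^sub>2 :: "'a::field mat"
  where "x\<^sub>1 \<in> skew_mats n" "invertible_mat x\<^sub>1" "x\<^sub>2 \<in> skew_mats n" "invertible_mat x\<^sub>2"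
    and "\<And>q. q \<in> upper_pairs n \<Longrightarrow> x\<^sub>1 $$ q - x\<^sub>2 $$ q = (if q = p then 2 else 0)"
proof -
  obtain i j where p: "p = (i, j)" "i < j" "j < n"
    using \<open>p \<in> upper_pairs n\<close> by (auto simp: upper_pairs_def)
  obtain \<sigma> and s :: "nat \<Rightarrow> 'a" where s: "signed_involution n \<sigma> s" "\<sigma> i = j" "s i = 1"
    using signed_involution_exists[OF \<open>even n\<close> p(2,3)] .
  define s' where "s' = (\<lambda>a. if a = i \<or> a = j then - s a else s a)"
  have s': "signed_involution n \<sigma> s'"
    unfolding s'_def using s p by (intro signed_involution_flip) auto
  have "\<sigma> j = i"
    using s p unfolding signed_involution_def by auto
  have "signed_perm_mat n \<sigma> s $$ q - signed_perm_mat n \<sigma> s' $$ q = (if q = p then 2 else 0)"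
    if q_upper: "q \<in> upper_pairs n" for q
  proof -
    obtain a b where q: "q = (a, b)" "a < b" "b < n"
      using q_upper by (auto simp: upper_pairs_def)
    then have "signed_perm_mat n \<sigma> s $$ q - signed_perm_mat n \<sigma> s' $$ q
        = (if b = \<sigma> a \<and> (a = i \<or> a = j) then 2 * s a else 0)"
      by (simp add: signed_perm_mat_def s'_def)
    also have "\<dots> = (if q = p then 2 * s a else 0)"
      using p q \<open>\<sigma> i = j\<close> \<open>\<sigma> j = i\<close> by (intro if_cong) auto
    finally show ?thesis
      using p q \<open>s i = 1\<close> by simp
  qed
  then show thesis
    using that signed_involution_mat_skew signed_involution_mat_invertible s(1) s' by metis
qed

lemma linear_on_skew_if_coordinates_recoverable:
  fixes \<psi> :: "'a::field mat \<Rightarrow> 'a mat"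
  assumes "(2::'a) \<noteq> 0"
    and \<psi>_skew: "\<And>y. y \<in> skew_mats n \<Longrightarrow> \<psi> y \<in> skew_mats n"
    and recover: "\<And>p. p \<in> upper_pairs n \<Longrightarrow>
          \<exists>w. \<forall>y\<in>skew_mats n. (\<Sum>q\<in>upper_pairs n. w q * \<psi> y $$ q) = y $$ p"
  shows "linear_on_skew n \<psi>"
  unfolding linear_on_skew_def
proof (intro ballI allI)
  obtain W where W: "\<And>p y. p \<in> upper_pairs n \<Longrightarrow> y \<in> skew_mats n \<Longrightarrow>
      (\<Sum>q\<in>upper_pairs n. W p q * \<psi> y $$ q) = y $$ p"
    using recover by metis
  fix x y :: "'a mat" and a b :: 'a
  assume x: "x \<in> skew_mats n" and y: "y \<in> skew_mats n"
  define u where "u = a \<cdot>\<^sub>m x + b \<cdot>\<^sub>m y"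
  have u: "u \<in> skew_mats n"
    unfolding u_def using x y by (rule skew_mats_lincomb)
  have carrier: "x \<in> carrier_mat n n" "y \<in> carrier_mat n n"
      "\<psi> x \<in> carrier_mat n n" "\<psi> y \<in> carrier_mat n n"
    using x y \<psi>_skew skew_mats_carrier by auto
  define c where "c q = \<psi> u $$ q - (a * \<psi> x $$ q + b * \<psi> y $$ q)" for q
  have "c q = 0" if "q \<in> upper_pairs n" for q
  proof (rule kernel_trivial_if_right_inverse[OF finite_upper_pairs _ _ that])
    show "(\<Sum>q\<in>upper_pairs n. W p q * \<psi> (skew_unit n p') $$ q) = (if p = p' then 1 else 0)"
      if "p \<in> upper_pairs n" "p' \<in> upper_pairs n" for p p'
      using W[OF that(1) skew_unit_skew[OF that(2)]] skew_unit_upper_entry[OF that(2,1)] by simp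
    show "(\<Sum>q\<in>upper_pairs n. W p q * c q) = 0" if p: "p \<in> upper_pairs n" for p
    proof -
      have "(\<Sum>q\<in>upper_pairs n. W p q * c q) = (\<Sum>q\<in>upper_pairs n. W p q * \<psi> u $$ q)
          - a * (\<Sum>q\<in>upper_pairs n. W p q * \<psi> x $$ q) - b * (\<Sum>q\<in>upper_pairs n. W p q * \<psi> y $$ q)"
        by (simp add: c_def sum_subtractf sum.distrib sum_distrib_left algebra_simps)
      also have "\<dots> = u $$ p - a * x $$ p - b * y $$ p"
        using W p u x y by simp
      also have "\<dots> = 0"
        using p carrier by (auto simp: u_def upper_pairs_def)
      finally show ?thesis .
    qed
  qed
  then show "\<psi> (a \<cdot>\<^sub>m x + b \<cdot>\<^sub>m y) = a \<cdot>\<^sub>m \<psi> x + b \<cdot>\<^sub>m \<psi> y"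
    unfolding u_def[symmetric]
    using \<psi>_skew[OF u] skew_mats_lincomb[OF \<psi>_skew[OF x] \<psi>_skew[OF y]] \<open>2 \<noteq> 0\<close> carrier
    by (intro skew_mats_eqI_upper) (auto simp: c_def upper_pairs_def)
qed

lemma upper_coordinate_recoverable:
  fixes \<psi> \<chi> :: "'a::field mat \<Rightarrow> 'a mat"
  assumes "even n" "(2::'a) \<noteq> 0" "p \<in> upper_pairs n"
    and pairing: "\<And>x y. x \<in> skew_mats n \<Longrightarrow> invertible_mat x \<Longrightarrow> y \<in> skew_mats n \<Longrightarrow>
          upper_pairing n x y = upper_pairing n (\<chi> x) (\<psi> y)"
  shows "\<exists>w. \<forall>y\<in>skew_mats n. (\<Sum>q\<in>upper_pairs n. w q * \<psi> y $$ q) = y $$ p"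
proof -
  obtain x\<^sub>1 x\<^sub>2 :: "'a mat" where x: "x\<^sub>1 \<in> skew_mats n" "invertible_mat x\<^sub>1" "x\<^sub>2 \<in> skew_mats n" "invertible_mat x\<^sub>2"
    and differ: "\<And>q. q \<in> upper_pairs n \<Longrightarrow> x\<^sub>1 $$ q - x\<^sub>2 $$ q = (if q = p then 2 else 0)"
    using invertible_skew_pair_exists[OF \<open>even n\<close> \<open>p \<in> upper_pairs n\<close>] by metis
  have "(\<Sum>q\<in>upper_pairs n. (\<chi> x\<^sub>1 $$ q - \<chi> x\<^sub>2 $$ q) * \<psi> y $$ q) = 2 * y $$ p"
    if y: "y \<in> skew_mats n" for y
  proof -
    have "(\<Sum>q\<in>upper_pairs n. (\<chi> x\<^sub>1 $$ q - \<chi> x\<^sub>2 $$ q) * \<psi> y $$ q)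
        = upper_pairing n (\<chi> x\<^sub>1) (\<psi> y) - upper_pairing n (\<chi> x\<^sub>2) (\<psi> y)"
      by (simp add: upper_pairing_def sum_subtractf left_diff_distrib)
    also have "\<dots> = upper_pairing n x\<^sub>1 y - upper_pairing n x\<^sub>2 y"
      using pairing[OF x(1,2) y] pairing[OF x(3,4) y] by simp
    also have "\<dots> = (\<Sum>q\<in>upper_pairs n. (x\<^sub>1 $$ q - x\<^sub>2 $$ q) * y $$ q)"
      by (simp add: upper_pairing_def sum_subtractf left_diff_distrib)
    also have "\<dots> = (\<Sum>q\<in>upper_pairs n. if q = p then 2 * y $$ q else 0)"
    proof (intro sum.cong refl)
      fix q assume "q \<in> upper_pairs n"
      then show "(x\<^sub>1 $$ q - x\<^sub>2 $$ q) * y $$ q = (if q = p then 2 * y $$ q else 0)"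
        using differ[of q] by simp
    qed
    also have "\<dots> = 2 * y $$ p"
      using \<open>p \<in> upper_pairs n\<close> by simp
    finally show ?thesis .
  qed
  then show ?thesis
    using \<open>2 \<noteq> 0\<close> by (intro exI[of _ "\<lambda>q. (\<chi> x\<^sub>1 $$ q - \<chi> x\<^sub>2 $$ q) / 2"])
      (simp add: sum_divide_distrib[symmetric])
qed

theorem lemma2p5:
  fixes n :: nat
    and \<psi> :: "'a::field mat \<Rightarrow> 'a mat"
    and \<chi> :: "'a mat \<Rightarrow> 'a mat"
  assumes "even n" and "n > 0"
    and "(2::'a) \<noteq> 0"
    and "infinite (UNIV :: 'a set) \<or> card (UNIV :: 'a set) \<ge> n^2 + 1"
    and "\<forall>y\<in>skew_mats n. \<psi> y \<in> skew_mats n"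
    and "\<forall>x\<in>skew_mats n. invertible_mat x \<longrightarrow> \<chi> x \<in> skew_mats n"
    and "\<forall>x\<in>skew_mats n. invertible_mat x \<longrightarrow>
           (\<forall>y\<in>skew_mats n. mat_trace (x * y) = mat_trace (\<chi> x * \<psi> y))"
  shows "linear_on_skew n \<psi>"
proof (rule linear_on_skew_if_coordinates_recoverable)
  have pairing: "upper_pairing n x y = upper_pairing n (\<chi> x) (\<psi> y)"
    if "x \<in> skew_mats n" "invertible_mat x" "y \<in> skew_mats n" for x y
    using assms(3,5-7) that by (intro upper_pairing_eq_if_trace_eq) auto
  show "\<exists>w. \<forall>y\<in>skew_mats n. (\<Sum>q\<in>upper_pairs n. w q * \<psi> y $$ q) = y $$ p"
    if "p \<in> upper_pairs n" for p
    using upper_coordinate_recoverable[OF \<open>even n\<close> \<open>2 \<noteq> 0\<close> that pairing] .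
qed (use assms(3,5) in auto)

end
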